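(* Let $A = A_s + A_i\epsilon\in\mathbb{DR}^{m\times n}$ with $m\ge n$ and $A_s$ of full column rank, and let $A_sP_s = Q_sR_s$ where $P_s\in\mathbb{R}^{n\times n}$ is a permutation matrix, $Q_s\in\mathbb{R}^{m\times n}$ has orthonormal columns and $R_s=(r_{s_{ij}})\in\mathbb{R}^{n\times n}$ is upper triangular and nonsingular. Put $B = Q_s^{\top}A_iP_s=[b_1,\dots,b_n]$. Define $P\in\mathbb{R}^{n\times n}$ with zero diagonal, strictly lower triangular part $$p_1(2{:}n) = b_1(2{:}n)/r_{s_{11}},\qquad p_k(k{+}1{:}n) = \Big(b_k(k{+}1{:}n) - \sum_{t=1}^{k-1} r_{s_{tk}}\,p_t(k{+}1{:}n)\Big)\Big/r_{s_{kk}},\quad k=2,\dots,n-1,$$ and $P^{\top}=-P$. Set $Q_i = (I_m - Q_sQ_s^{\top})A_iP_sR_s^{-1} + Q_sP$ and $R_i = Q_s^{\top}A_iP_s - PR_s$. Then $Q=Q_s+Q_i\epsilon$ satisfies $Q^{\top}Q=I_n$, $R = R_s+R_i\epsilon$ is upper triangular, and $AP_s = QR$.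
   Context: A dual number is $a = a_s + a_i\epsilon$ with $a_s,a_i\in\mathbb{R}$, where $\epsilon^2=0$, $\epsilon\neq 0$; $\mathbb{DR}^{m\times n}$ denotes the set of dual matrices $A = A_s + A_i\epsilon$ with $A_s, A_i\in\mathbb{R}^{m\times n}$. Products use $\epsilon^2=0$: $(A_s+A_i\epsilon)(B_s+B_i\epsilon) = A_sB_s + (A_sB_i + A_iB_s)\epsilon$. The transpose is $A^{\top}=A_s^{\top}+A_i^{\top}\epsilon$. A dual matrix is upper triangular if both parts are upper triangular. For a vector $v$, $v(a{:}b)$ is the subvector of entries $a$ through $b$. *)

theory Defs
  imports "Jordan_Normal_Form.DL_Rank" "Jordan_Normal_Form.Gauss_Jordan_Elimination"
    "HOL-Combinatorics.Permutations"
begin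

text \<open>Dual real matrices A = A_s + A_i eps, represented as pairs (A_s, A_i).\<close>
type_synonym dmat = "real mat \<times> real mat"

definition dmult :: "dmat \<Rightarrow> dmat \<Rightarrow> dmat" where
  "dmult A B = (fst A * fst B, fst A * snd B + snd A * fst B)"

definition dtrans :: "dmat \<Rightarrow> dmat" where
  "dtrans A = (transpose_mat (fst A), transpose_mat (snd A))"

definition dreal :: "real mat \<Rightarrow> dmat" where
  "dreal M = (M, 0\<^sub>m (dim_row M) (dim_col M))"

definition dupper_triangular :: "dmat \<Rightarrow> bool" where
  "dupper_triangular A \<longleftrightarrow> upper_triangular (fst A) \<and> upper_triangular (snd A)"

definition permutation_matrix :: "nat \<Rightarrow> real mat \<Rightarrow> bool" where
  "permutation_matrix n P \<longleftrightarrow>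
     (\<exists>\<sigma>. \<sigma> permutes {..<n} \<and> P = mat n n (\<lambda>(i,j). if i = \<sigma> j then 1 else 0))"

text \<open>Strictly lower part of P (0-indexed): entry (i,k) with i > k,
  P(i,k) = (B(i,k) - sum_{t<k} R(t,k) P(i,t)) / R(k,k).\<close>
fun plow :: "real mat \<Rightarrow> real mat \<Rightarrow> nat \<Rightarrow> nat \<Rightarrow> real" where
  "plow B R i k = (B $$ (i,k) - (\<Sum>t<k. R $$ (t,k) * plow B R i t)) / R $$ (k,k)"

definition Pmat :: "nat \<Rightarrow> real mat \<Rightarrow> real mat \<Rightarrow> real mat" where
  "Pmat n B R = mat n n (\<lambda>(i,j). if j < i then plow B R i j
                                 else if i < j then - plow B R j i else 0)"

end

theory Submission
  imports Defs
begin

text \<open>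
  Differentiate the QR factorisation: writing \<open>X = A\<^sub>iP\<^sub>s\<close>, the conditions
  \<open>Q\<^sup>TQ = I\<close> and \<open>AP\<^sub>s = QR\<close> at order \<open>\<epsilon>\<close> say that \<open>Q\<^sub>s\<^sup>TQ\<^sub>i\<close> is skew-symmetric and
  \<open>Q\<^sub>sR\<^sub>i + Q\<^sub>iR\<^sub>s = X\<close>. Splitting \<open>Q\<^sub>i\<close> along the range of \<open>Q\<^sub>s\<close> and its orthogonal
  complement, the complement part is forced to be \<open>(I - Q\<^sub>sQ\<^sub>s\<^sup>T)XR\<^sub>s\<^sup>-\<^sup>1\<close> and the range part
  is \<open>Q\<^sub>sP\<close> for a skew-symmetric \<open>P\<close>; then \<open>R\<^sub>i = Q\<^sub>s\<^sup>TX - PR\<^sub>s\<close>. The recursion defining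
  the strictly lower part of \<open>P\<close> is forward substitution for the equations
  \<open>(PR\<^sub>s)(i,j) = B(i,j)\<close>, \<open>j < i\<close>, which say exactly that \<open>R\<^sub>i\<close> is upper triangular.
\<close>

declare plow.simps[simp del]

lemma invertible_mat_Units:
  assumes "A \<in> carrier_mat n n" and "invertible_mat A"
  shows "A \<in> Units (ring_mat TYPE('a :: semiring_1) n b)"
proof -
  obtain B where AB: "A * B = 1\<^sub>m n" and BA: "B * A = 1\<^sub>m (dim_row B)"
    using assms unfolding invertible_mat_def inverts_mat_def by auto
  have "dim_col B = n" using arg_cong[OF AB, of dim_col] by simp
  moreover have "dim_row B = n" using arg_cong[OF BA, of dim_col] assms(1) by simp
  ultimately have "B \<in> carrier_mat n n" by auto
  with assms(1) AB BA show ?thesis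
    unfolding Units_def ring_mat_def by auto
qed

lemma mat_inverse_left_inverse:
  fixes A :: "'a :: field mat"
  assumes "A \<in> carrier_mat n n" and "invertible_mat A"
  shows "the (mat_inverse A) * A = 1\<^sub>m n" and "the (mat_inverse A) \<in> carrier_mat n n"
proof -
  have "mat_inverse A \<noteq> None"
    using mat_inverse(1)[OF assms(1), where b = "()"] invertible_mat_Units[OF assms, where b = "()"] by blast
  then obtain B where "mat_inverse A = Some B" by auto
  with mat_inverse(2)[OF assms(1)] show "the (mat_inverse A) * A = 1\<^sub>m n"
    and "the (mat_inverse A) \<in> carrier_mat n n" by auto
qed

lemma upper_triangular_invertible_diag_nonzero:
  fixes A :: "'a :: field mat"
  assumes A: "A \<in> carrier_mat n n" and "upper_triangular A" and "invertible_mat A" and "j < n"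
  shows "A $$ (j,j) \<noteq> 0"
proof
  assume "A $$ (j,j) = 0"
  with A \<open>j < n\<close> have "(\<Prod>i = 0..<dim_row A. A $$ (i,i)) = 0" by auto
  moreover have "det A \<noteq> 0"
    by (rule unit_imp_det_non_zero[OF invertible_mat_Units[OF A \<open>invertible_mat A\<close>]])
  ultimately show False
    using det_upper_triangular[OF \<open>upper_triangular A\<close> A] prod_list_diag_prod by metis
qed

lemma Pmat_carrier: "Pmat n B R \<in> carrier_mat n n"
  unfolding Pmat_def by auto

lemma transpose_Pmat: "transpose_mat (Pmat n B R) = - Pmat n B R"
  by (rule eq_matI) (auto simp: Pmat_def)

lemma Pmat_mult_lower_entry:
  assumes R: "R \<in> carrier_mat n n" "upper_triangular R"
    and diag: "R $$ (j,j) \<noteq> 0" and "j < i" and "i < n"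
  shows "(Pmat n B R * R) $$ (i,j) = B $$ (i,j)"
proof -
  let ?P = "Pmat n B R"
  have P_lower: "?P $$ (i,t) = plow B R i t" if "t < i" for t
    using that \<open>i < n\<close> unfolding Pmat_def by simp
  have R_upper: "R $$ (t,j) = 0" if "j < t" "t < n" for t
    using upper_triangularD[OF R(2)] that R(1) by auto
  have "(?P * R) $$ (i,j) = (\<Sum>t<n. ?P $$ (i,t) * R $$ (t,j))"
    using assms Pmat_carrier[of n B R]
    by (simp add: scalar_prod_def lessThan_atLeast0)
  also have "\<dots> = (\<Sum>t<Suc j. ?P $$ (i,t) * R $$ (t,j))"
    using R_upper \<open>j < i\<close> \<open>i < n\<close> by (intro sum.mono_neutral_right) auto
  also have "\<dots> = (\<Sum>t<j. R $$ (t,j) * plow B R i t) + plow B R i j * R $$ (j,j)"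
    using \<open>j < i\<close> by (simp add: P_lower mult.commute)
  also have "\<dots> = B $$ (i,j)"
    using diag by (simp add: plow.simps[of B R i j])
  finally show ?thesis .
qed

lemma upper_triangular_minus_Pmat_mult:
  assumes "B \<in> carrier_mat n n" and R: "R \<in> carrier_mat n n" "upper_triangular R"
    and diag: "\<And>j. j < n \<Longrightarrow> R $$ (j,j) \<noteq> 0"
  shows "upper_triangular (B - Pmat n B R * R)"
proof
  fix i j assume "j < i" and "i < dim_row (B - Pmat n B R * R)"
  with assms Pmat_carrier[of n B R] have "i < n" by simp
  then have "(Pmat n B R * R) $$ (i,j) = B $$ (i,j)"
    using diag \<open>j < i\<close> by (intro Pmat_mult_lower_entry[OF R]) auto
  with \<open>j < i\<close> \<open>i < n\<close> assms Pmat_carrier[of n B R]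
  show "(B - Pmat n B R * R) $$ (i,j) = 0" by simp
qed

lemma transpose_mult_orth_complement:
  fixes Q :: "'a :: comm_ring_1 mat"
  assumes Q: "Q \<in> carrier_mat m n" and QQ: "transpose_mat Q * Q = 1\<^sub>m n"
  shows "transpose_mat Q * (1\<^sub>m m - Q * transpose_mat Q) = 0\<^sub>m n m"
proof -
  have QT: "transpose_mat Q \<in> carrier_mat n m" using Q by simp
  have "transpose_mat Q * (1\<^sub>m m - Q * transpose_mat Q)
      = transpose_mat Q * 1\<^sub>m m - transpose_mat Q * (Q * transpose_mat Q)"
    using Q QT by (intro mult_minus_distrib_mat) auto
  also have "transpose_mat Q * (Q * transpose_mat Q) = transpose_mat Q * Q * transpose_mat Q"
    using Q QT by (simp add: assoc_mult_mat)
  finally show ?thesis using QQ QT by simp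
qed

lemma transpose_mult_QR_perturbation:
  fixes Q :: "'a :: comm_ring_1 mat"
  assumes Q: "Q \<in> carrier_mat m n" and QQ: "transpose_mat Q * Q = 1\<^sub>m n"
    and X: "X \<in> carrier_mat m n" and Rinv: "Rinv \<in> carrier_mat n n" and P: "P \<in> carrier_mat n n"
  shows "transpose_mat Q * ((1\<^sub>m m - Q * transpose_mat Q) * X * Rinv + Q * P) = P"
proof -
  let ?QT = "transpose_mat Q" and ?M = "1\<^sub>m m - Q * transpose_mat Q"
  have QT: "?QT \<in> carrier_mat n m" and M: "?M \<in> carrier_mat m m" using Q by auto
  have MX: "?M * X \<in> carrier_mat m n" using M X by simp
  have "?QT * (?M * X * Rinv + Q * P) = ?QT * (?M * X * Rinv) + ?QT * (Q * P)"
    using QT MX Rinv Q P by (intro mult_add_distrib_mat) auto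
  also have "?QT * (?M * X * Rinv) = ?QT * ?M * X * Rinv"
    by (simp add: assoc_mult_mat[OF QT MX Rinv, symmetric] assoc_mult_mat[OF QT M X])
  also have "?QT * (Q * P) = ?QT * Q * P"
    by (rule assoc_mult_mat[OF QT Q P, symmetric])
  also have "?QT * ?M * X * Rinv + ?QT * Q * P = P"
    using transpose_mult_orth_complement[OF Q QQ] QQ X Rinv P by simp
  finally show ?thesis .
qed

lemma QR_perturbation_factorization:
  fixes Q :: "'a :: comm_ring_1 mat"
  assumes Q: "Q \<in> carrier_mat m n" and X: "X \<in> carrier_mat m n" and P: "P \<in> carrier_mat n n"
    and R: "R \<in> carrier_mat n n" and Rinv: "Rinv \<in> carrier_mat n n" and RR: "Rinv * R = 1\<^sub>m n"
  shows "Q * (transpose_mat Q * X - P * R)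
       + ((1\<^sub>m m - Q * transpose_mat Q) * X * Rinv + Q * P) * R = X"
proof -
  let ?QT = "transpose_mat Q" and ?M = "1\<^sub>m m - Q * transpose_mat Q"
  have QT: "?QT \<in> carrier_mat n m" and M: "?M \<in> carrier_mat m m" using Q by auto
  have MX: "?M * X \<in> carrier_mat m n" using M X by simp
  have "Q * (?QT * X - P * R) = Q * (?QT * X) - Q * (P * R)"
    using Q QT X P R by (intro mult_minus_distrib_mat) auto
  also have "\<dots> = Q * ?QT * X - Q * P * R"
    by (simp add: assoc_mult_mat[OF Q QT X] assoc_mult_mat[OF Q P R])
  finally have range_part: "Q * (?QT * X - P * R) = Q * ?QT * X - Q * P * R" .
  have "(?M * X * Rinv + Q * P) * R = ?M * X * Rinv * R + Q * P * R"
    using MX Rinv Q P R by (intro add_mult_distrib_mat) auto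
  also have "?M * X * Rinv * R = ?M * X"
    using RR by (simp add: assoc_mult_mat[OF MX Rinv R] right_mult_one_mat[OF MX])
  finally have complement_part: "(?M * X * Rinv + Q * P) * R = ?M * X + Q * P * R" .
  have "?M * X = X - Q * ?QT * X"
    using Q QT X by (subst minus_mult_distrib_mat[OF _ _ X]) auto
  with range_part complement_part show ?thesis
    using Q QT X P R by (intro eq_matI) auto
qed

lemma dual_orthonormal_columns:
  assumes Q: "Q \<in> carrier_mat m n" and E: "E \<in> carrier_mat m n"
    and QQ: "transpose_mat Q * Q = 1\<^sub>m n"
    and S: "transpose_mat Q * E = S" and skew: "transpose_mat S = - S"
  shows "dmult (dtrans (Q, E)) (Q, E) = dreal (1\<^sub>m n)"
proof -
  have "transpose_mat E * Q = transpose_mat (transpose_mat Q * E)"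
    using Q E by (simp add: transpose_mult)
  also have "\<dots> = - S" using S skew by simp
  finally have "transpose_mat Q * E + transpose_mat E * Q = 0\<^sub>m n n"
    using S Q E by (intro eq_matI) auto
  with QQ show ?thesis
    unfolding dmult_def dtrans_def dreal_def by simp
qed

lemma dmult_dreal_right:
  assumes "A \<in> carrier_mat m n" and "E \<in> carrier_mat m n" and "P \<in> carrier_mat n n"
  shows "dmult (A, E) (dreal P) = (A * P, E * P)"
  using assms unfolding dmult_def dreal_def by simp

theorem mainTheorem4:
  fixes m n :: nat and As Ai Ps Qs Rs :: "real mat"
  assumes "As \<in> carrier_mat m n" and "Ai \<in> carrier_mat m n" and "n \<le> m"
    and "vec_space.rank m As = n"
    and "Ps \<in> carrier_mat n n" and "permutation_matrix n Ps"
    and "Qs \<in> carrier_mat m n" and "transpose_mat Qs * Qs = 1\<^sub>m n"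
    and "Rs \<in> carrier_mat n n" and "upper_triangular Rs" and "invertible_mat Rs"
    and "As * Ps = Qs * Rs"
  defines "B \<equiv> transpose_mat Qs * Ai * Ps"
  defines "P \<equiv> Pmat n B Rs"
  defines "Qi \<equiv> (1\<^sub>m m - Qs * transpose_mat Qs) * Ai * Ps * the (mat_inverse Rs) + Qs * P"
  defines "Ri \<equiv> transpose_mat Qs * Ai * Ps - P * Rs"
  shows "dmult (dtrans (Qs, Qi)) (Qs, Qi) = dreal (1\<^sub>m n)
     \<and> dupper_triangular (Rs, Ri)
     \<and> dmult (As, Ai) (dreal Ps) = dmult (Qs, Qi) (Rs, Ri)"
proof -
  note As = assms(1) and Ai = assms(2) and Ps = assms(5) and Qs = assms(7) and QQ = assms(8)
    and Rs = assms(9) and Rs_upper = assms(10) and Rs_inv = assms(11)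
  define X where "X = Ai * Ps"
  have X: "X \<in> carrier_mat m n" using Ai Ps unfolding X_def by simp
  have Qi_X: "Qi = (1\<^sub>m m - Qs * transpose_mat Qs) * X * the (mat_inverse Rs) + Qs * P"
    using Qs Ai Ps unfolding Qi_def X_def by (subst assoc_mult_mat) auto
  have Ri_X: "Ri = transpose_mat Qs * X - P * Rs"
    using Qs Ai Ps unfolding Ri_def X_def by (simp add: assoc_mult_mat)
  note Rinv = mat_inverse_left_inverse[OF Rs Rs_inv]
  have P: "P \<in> carrier_mat n n" unfolding P_def by (rule Pmat_carrier)
  have Qi: "Qi \<in> carrier_mat m n" using Qs X Rinv(2) P unfolding Qi_X by simp
  have "transpose_mat Qs * Qi = P"
    unfolding Qi_X by (rule transpose_mult_QR_perturbation[OF Qs QQ X Rinv(2) P])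
  then have orthonormal: "dmult (dtrans (Qs, Qi)) (Qs, Qi) = dreal (1\<^sub>m n)"
    using dual_orthonormal_columns[OF Qs Qi QQ] transpose_Pmat unfolding P_def by blast
  have "upper_triangular Ri"
    unfolding Ri_def B_def[symmetric] P_def
    using Qs Ai Ps upper_triangular_invertible_diag_nonzero[OF Rs Rs_upper Rs_inv]
    by (intro upper_triangular_minus_Pmat_mult[OF _ Rs Rs_upper]) (auto simp: B_def)
  moreover have "dmult (As, Ai) (dreal Ps) = dmult (Qs, Qi) (Rs, Ri)"
    using dmult_dreal_right[OF As Ai Ps] QR_perturbation_factorization[OF Qs X P Rs Rinv(2,1)]
    unfolding dmult_def X_def[symmetric] Qi_X Ri_X assms(12) by simp
  ultimately show ?thesis
    using orthonormal Rs_upper unfolding dupper_triangular_def by simp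
qed

end
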